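(* For every type $\varphi$ of $(\lambda\beta\eta\pi* )'$ the following hold. (CR0) If $\varphi\in\mathit{Iso}(\top)$, then $*^\varphi$ is reducible. (CR1) If $t^\varphi$ is reducible, then $t^\varphi$ is SN. (CR2) If $t^\varphi$ is reducible and $t^\varphi\to t'$, then $t'$ is reducible. (CR3) If $t^\varphi$ is neutral and every $t'$ with $t^\varphi\to t'$ is reducible, then $t^\varphi$ is reducible.
   Context: Types are built from a distinguished type constant $\top$ and type variables by means of $\varphi\times\psi$ and $\varphi\to\psi$; an atomic type is $\top$ or a type variable. Terms are simply typed (each variable carries its type): the term constant $*^\top$, variables $x^\varphi$, abstractions $(\lambda x^\varphi.t^\psi)^{\varphi\to\psi}$, applications $(u^{\varphi\to\psi}v^\varphi)^\psi$, pairs $\langle u^\varphi,v^\psi\rangle^{\varphi\times\psi}$, projections $(\pi_1 t^{\varphi\times\psi})^\varphi$, $(\pi_2 t^{\varphi\times\psi})^\psi$. Terms are identified up to renaming of bound variables, written $\equiv$; $\mathrm{FV}(t)$ is the set of free variables. The set $\mathit{Iso}(\top)$ is the least set of types containing $\top$, containing $\varphi\to\tau$ whenever $\tau\in\mathit{Iso}(\top)$ ($\varphi$ arbitrary), and containing $\tau_1\times\tau_2$ whenever $\tau_1,\tau_2\in\mathit{Iso}(\top)$. For $\tau\in\mathit{Iso}(\top)$ the canonical term $*^\tau$ is: $*^\top$ the constant; $*^{\varphi\to\tau}:=\lambda x^\varphi.*^\tau$; $*^{\tau_1\times\tau_2}:=\langle *^{\tau_1},*^{\tau_2}\rangle$ (writing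 $*^\varphi$ presupposes $\varphi\in\mathit{Iso}(\top)$). The one-step rewrite relation $\to$ of $(\lambda\beta\eta\pi* )'$ is the closure under arbitrary term contexts of: $(\beta)$ $(\lambda x.u)v\to u[x:=v]$; $(\pi_1)$ $\pi_1\langle u,v\rangle\to u$; $(\pi_2)$ $\pi_2\langle u,v\rangle\to v$; $(\eta)$ $\lambda x.tx\to t$ if $x\notin\mathrm{FV}(t)$; $(SP)$ $\langle\pi_1u,\pi_2u\rangle\to u$; (gentop) $u^\tau\to *^\tau$ if $\tau\in\mathit{Iso}(\top)$ and $u\not\equiv *^\tau$; $(\eta_{top})$ $\lambda x^\tau.t\,*^\tau\to t$ if $\tau\in\mathit{Iso}(\top)$, $x\notin\mathrm{FV}(t)$; $(SP_{top}1)$ $\langle\pi_1u,*^\tau\rangle\to u$ for $u$ of type $\varphi\times\tau$, $\tau\in\mathit{Iso}(\top)$; $(SP_{top}2)$ $\langle *^\tau,\pi_2u\rangle\to u$ for $u$ of type $\tau\times\psi$, $\tau\in\mathit{Iso}(\top)$. A term is SN if there is no infinite $\to$-sequence starting from it. Reducibility is defined by induction on types: a term of atomic type is reducible iff it is SN; a term $t$ of type $\varphi\times\psi$ is reducible iff $\pi_1t$ and $\pi_2t$ are reducible; a term $t$ of type $\varphi\to\psi$ is reducible iff $tu$ is reducible for every reducible term $u$ of type $\varphi$. A term is neutral if it is not of the form $\langle u,v\rangle$ or $\lambda x.v$. *)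

theory Defs
  imports Main
begin

datatype ty = TTop | TVar nat | Prod ty ty | Fun ty ty

text \<open>Terms up to alpha-equivalence: bound variables are de Bruijn indices
  (the binder carries the type), free variables are named and carry their type.\<close>
datatype tm =
    Star
  | Free nat ty
  | Bound nat
  | Lam ty tm
  | App tm tm
  | Pair tm tm
  | Pi1 tm
  | Pi2 tm

text \<open>Typing; the list gives the types of the loose de Bruijn indices.
  A term of type phi is a term t with typing [] t phi.\<close>
inductive typing :: "ty list \<Rightarrow> tm \<Rightarrow> ty \<Rightarrow> bool" where
  t_star: "typing G Star TTop"
| t_free: "typing G (Free x A) A"
| t_bound: "i < length G \<Longrightarrow> typing G (Bound i) (G ! i)"
| t_lam: "typing (A # G) t B \<Longrightarrow> typing G (Lam A t) (Fun A B)"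
| t_app: "typing G u (Fun A B) \<Longrightarrow> typing G v A \<Longrightarrow> typing G (App u v) B"
| t_pair: "typing G u A \<Longrightarrow> typing G v B \<Longrightarrow> typing G (Pair u v) (Prod A B)"
| t_pi1: "typing G t (Prod A B) \<Longrightarrow> typing G (Pi1 t) A"
| t_pi2: "typing G t (Prod A B) \<Longrightarrow> typing G (Pi2 t) B"

inductive iso :: "ty \<Rightarrow> bool" where
  iso_top: "iso TTop"
| iso_fun: "iso B \<Longrightarrow> iso (Fun A B)"
| iso_prod: "iso A \<Longrightarrow> iso B \<Longrightarrow> iso (Prod A B)"

text \<open>Canonical term *^tau (only meaningful for tau in Iso(top)).\<close>
fun star_tm :: "ty \<Rightarrow> tm" where
  "star_tm TTop = Star"
| "star_tm (Fun A B) = Lam A (star_tm B)"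
| "star_tm (Prod A B) = Pair (star_tm A) (star_tm B)"
| "star_tm (TVar a) = Star"

fun lift :: "nat \<Rightarrow> tm \<Rightarrow> tm" where
  "lift k Star = Star"
| "lift k (Free x A) = Free x A"
| "lift k (Bound i) = (if i < k then Bound i else Bound (Suc i))"
| "lift k (Lam A t) = Lam A (lift (Suc k) t)"
| "lift k (App u v) = App (lift k u) (lift k v)"
| "lift k (Pair u v) = Pair (lift k u) (lift k v)"
| "lift k (Pi1 t) = Pi1 (lift k t)"
| "lift k (Pi2 t) = Pi2 (lift k t)"

fun subst :: "nat \<Rightarrow> tm \<Rightarrow> tm \<Rightarrow> tm" where
  "subst k Star s = Star"
| "subst k (Free x A) s = Free x A"
| "subst k (Bound i) s = (if i < k then Bound i else if i = k then s else Bound (i - 1))"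
| "subst k (Lam A t) s = Lam A (subst (Suc k) t (lift 0 s))"
| "subst k (App u v) s = App (subst k u s) (subst k v s)"
| "subst k (Pair u v) s = Pair (subst k u s) (subst k v s)"
| "subst k (Pi1 t) s = Pi1 (subst k t s)"
| "subst k (Pi2 t) s = Pi2 (subst k t s)"

text \<open>The list G records the types of the binders above the redex (needed to know
  the type of a subterm for the typed rules).  The condition x not free in t of
  the eta rules is expressed by writing the function part as  lift 0 t.\<close>
inductive red :: "ty list \<Rightarrow> tm \<Rightarrow> tm \<Rightarrow> bool" where
  beta: "red G (App (Lam A u) v) (subst 0 u v)"
| pi1: "red G (Pi1 (Pair u v)) u"
| pi2: "red G (Pi2 (Pair u v)) v"
| eta: "red G (Lam A (App (lift 0 t) (Bound 0))) t"
| sp: "red G (Pair (Pi1 u) (Pi2 u)) u"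
| gentop: "typing G u T \<Longrightarrow> iso T \<Longrightarrow> u \<noteq> star_tm T \<Longrightarrow> red G u (star_tm T)"
| eta_top: "iso T \<Longrightarrow> red G (Lam T (App (lift 0 t) (star_tm T))) t"
| sp_top1: "typing G u (Prod A T) \<Longrightarrow> iso T \<Longrightarrow> red G (Pair (Pi1 u) (star_tm T)) u"
| sp_top2: "typing G u (Prod T B) \<Longrightarrow> iso T \<Longrightarrow> red G (Pair (star_tm T) (Pi2 u)) u"
| c_lam: "red (A # G) t t' \<Longrightarrow> red G (Lam A t) (Lam A t')"
| c_appl: "red G u u' \<Longrightarrow> red G (App u v) (App u' v)"
| c_appr: "red G v v' \<Longrightarrow> red G (App u v) (App u v')"
| c_pairl: "red G u u' \<Longrightarrow> red G (Pair u v) (Pair u' v)"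
| c_pairr: "red G v v' \<Longrightarrow> red G (Pair u v) (Pair u v')"
| c_pi1: "red G t t' \<Longrightarrow> red G (Pi1 t) (Pi1 t')"
| c_pi2: "red G t t' \<Longrightarrow> red G (Pi2 t) (Pi2 t')"

definition SN :: "tm \<Rightarrow> bool" where
  "SN t \<longleftrightarrow> \<not> (\<exists>f. f 0 = t \<and> (\<forall>i. red [] (f i) (f (Suc i))))"

fun reducible :: "ty \<Rightarrow> tm \<Rightarrow> bool" where
  "reducible TTop t = SN t"
| "reducible (TVar a) t = SN t"
| "reducible (Prod A B) t = (reducible A (Pi1 t) \<and> reducible B (Pi2 t))"
| "reducible (Fun A B) t = (\<forall>u. typing [] u A \<longrightarrow> reducible A u \<longrightarrow> reducible B (App t u))"

definition neutral :: "tm \<Rightarrow> bool" where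
  "neutral t \<longleftrightarrow> (\<forall>u v. t \<noteq> Pair u v) \<and> (\<forall>A v. t \<noteq> Lam A v)"

end

theory Submission
  imports Defs
begin

text \<open>Girard's reducibility argument, by simultaneous induction on the type. The only new
  ingredient is the rule gentop: any term of a type \<open>\<tau> \<in> Iso(\<top>)\<close> may reduce to \<open>*\<^sup>\<tau>\<close>, so
  each closure argument for neutral terms (CR3) must also know that \<open>*\<^sup>\<tau>\<close> is reducible at the
  type of the term, which is CR0 for that type. CR0 itself is proved from CR3 of the component
  types, using that \<open>*\<^sup>\<tau>\<close> is a normal form. Since reducibility at an arrow type only quantifies
  over typed arguments, the induction on the strong normalisation of the argument in CR3 needs
  subject reduction.\<close>

inductive_cases typing_StarE: "typing G Star T"
inductive_cases typing_FreeE: "typing G (Free x A) T"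
inductive_cases typing_BoundE: "typing G (Bound i) T"
inductive_cases typing_LamE: "typing G (Lam A t) T"
inductive_cases typing_AppE: "typing G (App u v) T"
inductive_cases typing_PairE: "typing G (Pair u v) T"
inductive_cases typing_Pi1E: "typing G (Pi1 t) T"
inductive_cases typing_Pi2E: "typing G (Pi2 t) T"

lemma typing_unique: "typing G t T \<Longrightarrow> typing G t T' \<Longrightarrow> T = T'"
proof (induction arbitrary: T' rule: typing.induct)
  case (t_lam A G t B)
  then show ?case by (blast elim: typing_LamE)
next
  case (t_app G u A B v)
  then show ?case by (blast elim: typing_AppE)
next
  case (t_pair G u A v B)
  then show ?case by (blast elim: typing_PairE)
next
  case (t_pi1 G t A B)
  then show ?case by (blast elim: typing_Pi1E)
next
  case (t_pi2 G t A B)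
  then show ?case by (blast elim: typing_Pi2E)
qed (auto elim: typing_StarE typing_FreeE typing_BoundE)

lemma typing_star_tm: "iso T \<Longrightarrow> typing G (star_tm T) T"
  by (induction arbitrary: G rule: iso.induct) (auto intro: typing.intros)

lemma typing_BoundI: "i < length G \<Longrightarrow> T = G ! i \<Longrightarrow> typing G (Bound i) T"
  using t_bound by simp

lemma typing_lift:
  "typing G t T \<Longrightarrow> k \<le> length G \<Longrightarrow> typing (take k G @ B # drop k G) (lift k t) T"
proof (induction arbitrary: k rule: typing.induct)
  case (t_bound i G)
  then show ?case by (auto intro!: typing_BoundI simp: nth_append)
next
  case (t_lam A G t B)
  then show ?case using t_lam.IH[of "Suc k"] by (auto intro!: typing.t_lam)
qed (auto intro: typing.intros)

lemma typing_unlift: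
  "typing (take k G @ B # drop k G) (lift k t) T \<Longrightarrow> k \<le> length G \<Longrightarrow> typing G t T"
proof (induction t arbitrary: G k T)
  case (Bound i)
  then show ?case
    by (auto elim!: typing_BoundE intro!: typing_BoundI simp: nth_append split: if_splits)
next
  case (Lam A t)
  from Lam.prems obtain C where "T = Fun A C"
    and "typing (take (Suc k) (A # G) @ B # drop (Suc k) (A # G)) (lift (Suc k) t) C"
    by (auto elim: typing_LamE)
  with Lam.IH[of "Suc k" "A # G" C] Lam.prems(2) show ?case by (auto intro: t_lam)
next
  case (App u v)
  then show ?case by (fastforce elim!: typing_AppE intro: t_app)
next
  case (Pair u v)
  then show ?case by (fastforce elim!: typing_PairE intro: t_pair)
next
  case (Pi1 u)
  then show ?case by (fastforce elim!: typing_Pi1E intro: t_pi1)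
next
  case (Pi2 u)
  then show ?case by (fastforce elim!: typing_Pi2E intro: t_pi2)
qed (auto elim: typing_StarE typing_FreeE intro: typing.intros)

lemma typing_subst:
  "typing G t T \<Longrightarrow> k < length G \<Longrightarrow> typing (take k G @ drop (Suc k) G) s (G ! k)
   \<Longrightarrow> typing (take k G @ drop (Suc k) G) (subst k t s) T"
proof (induction arbitrary: k s rule: typing.induct)
  case (t_bound i G)
  consider "i < k" | "i = k" | j where "i = Suc j" "k \<le> j"
    by (metis not0_implies_Suc not_less_eq nat_less_le less_nat_zero_code not_less)
  then show ?case
    by cases (use t_bound in \<open>auto intro!: typing_BoundI simp: nth_append\<close>)
next
  case (t_lam A G t B)
  have "typing (A # take k G @ drop (Suc k) G) (lift 0 s) (G ! k)"
    using typing_lift[OF t_lam.prems(2), of 0 A] by simp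
  then show ?case using t_lam.IH[of "Suc k" "lift 0 s"] t_lam.prems by (auto intro!: typing.t_lam)
qed (simp; blast intro: typing.intros)+

lemma typing_subst0: "typing (A # G) u T \<Longrightarrow> typing G v A \<Longrightarrow> typing G (subst 0 u v) T"
  using typing_subst[of "A # G" u T 0 v] by simp

lemma typing_unlift0: "typing (A # G) (lift 0 t) T \<Longrightarrow> typing G t T"
  using typing_unlift[of 0 G A t T] by simp

lemma subject_reduction: "red G t t' \<Longrightarrow> typing G t T \<Longrightarrow> typing G t' T"
proof (induction arbitrary: T rule: red.induct)
  case (beta G A u v)
  then show ?case by (auto elim!: typing_AppE typing_LamE intro: typing_subst0)
next
  case (eta G A t)
  then show ?case by (auto elim!: typing_LamE typing_AppE typing_BoundE dest!: typing_unlift0)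
next
  case (sp G u)
  then show ?case by (auto elim!: typing_PairE typing_Pi1E typing_Pi2E dest: typing_unique)
next
  case (gentop G u T')
  then show ?case using typing_unique typing_star_tm by blast
next
  case (eta_top T0 G t)
  then show ?case
    by (auto elim!: typing_LamE typing_AppE dest!: typing_unlift0
        dest: typing_unique[OF typing_star_tm])
next
  case (sp_top1 G u A T0)
  then show ?case
    by (auto elim!: typing_PairE typing_Pi1E dest: typing_unique typing_unique[OF typing_star_tm])
next
  case (sp_top2 G u T0 B)
  then show ?case
    by (auto elim!: typing_PairE typing_Pi2E dest: typing_unique typing_unique[OF typing_star_tm])
qed (fastforce elim: typing_LamE typing_AppE typing_PairE typing_Pi1E typing_Pi2E intro: typing.intros)+

lemma star_tm_neq: "star_tm T \<noteq> App u v" "star_tm T \<noteq> Pi1 t" "star_tm T \<noteq> Pi2 t"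
  by (cases T; simp)+

lemma subst_star_tm [simp]: "subst k (star_tm T) s = star_tm T"
  by (induction T arbitrary: k s) auto

lemma star_tm_normal: "iso T \<Longrightarrow> \<not> red G (star_tm T) r"
proof (induction arbitrary: G r rule: iso.induct)
  case iso_top
  show ?case
  proof
    assume "red G (star_tm TTop) r"
    then show False
      by (cases rule: red.cases) (auto dest: typing_unique[OF t_star] simp: star_tm_neq)
  qed
next
  case (iso_fun B A)
  show ?case
  proof
    assume "red G (star_tm (Fun A B)) r"
    moreover have "typing G (star_tm (Fun A B)) (Fun A B)"
      using iso_fun.hyps by (intro typing_star_tm iso.intros)
    ultimately show False
      using iso_fun.IH by (cases rule: red.cases) (auto dest: typing_unique simp: star_tm_neq)
  qed
next
  case (iso_prod A B)
  show ?case
  proof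
    assume "red G (star_tm (Prod A B)) r"
    moreover have "typing G (star_tm (Prod A B)) (Prod A B)"
      using iso_prod.hyps by (intro typing_star_tm iso.intros)
    ultimately show False
      using iso_prod.IH by (cases rule: red.cases) (auto dest: typing_unique simp: star_tm_neq)
  qed
qed

lemma red_App_cases:
  "red G (App u v) r \<Longrightarrow>
     (\<exists>A b. u = Lam A b \<and> r = subst 0 b v)
   \<or> (\<exists>T. typing G (App u v) T \<and> iso T \<and> r = star_tm T)
   \<or> (\<exists>u'. red G u u' \<and> r = App u' v) \<or> (\<exists>v'. red G v v' \<and> r = App u v')"
  by (erule red.cases) auto

lemma red_Pi1_cases:
  "red G (Pi1 t) r \<Longrightarrow>
     (\<exists>v. t = Pair r v) \<or> (\<exists>T. typing G (Pi1 t) T \<and> iso T \<and> r = star_tm T)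
   \<or> (\<exists>t'. red G t t' \<and> r = Pi1 t')"
  by (erule red.cases) auto

lemma red_Pi2_cases:
  "red G (Pi2 t) r \<Longrightarrow>
     (\<exists>u. t = Pair u r) \<or> (\<exists>T. typing G (Pi2 t) T \<and> iso T \<and> r = star_tm T)
   \<or> (\<exists>t'. red G t t' \<and> r = Pi2 t')"
  by (erule red.cases) auto

lemma red_Free_cases: "red G (Free x A) r \<Longrightarrow> iso A \<and> r = star_tm A"
  by (erule red.cases) (auto elim: typing_FreeE)

lemma SN_iff_termip: "SN t \<longleftrightarrow> termip (red []) t"
proof
  show "SN t" if "termip (red []) t"
    using that
  proof (induction rule: accp.induct)
    case (accI x)
    show "SN x" unfolding SN_def
    proof
      assume "\<exists>f. f 0 = x \<and> (\<forall>i. red [] (f i) (f (Suc i)))"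
      then obtain f where f0: "f 0 = x" and chain: "\<forall>i. red [] (f i) (f (Suc i))"
        by blast
      have "red [] x (f 1)" using chain f0 by (metis One_nat_def)
      then have "SN (f 1)" using accI.IH by simp
      moreover have "\<exists>g. g 0 = f 1 \<and> (\<forall>i. red [] (g i) (g (Suc i)))"
        using chain by (intro exI[of _ "\<lambda>i. f (Suc i)"]) simp
      ultimately show False unfolding SN_def by blast
    qed
  qed
  show "termip (red []) t" if "SN t"
  proof (rule ccontr)
    assume nt: "\<not> termip (red []) t"
    have "\<exists>f. \<forall>n. (\<not> termip (red []) (f n) \<and> (n = 0 \<longrightarrow> f n = t)) \<and> red [] (f n) (f (Suc n))"
    proof (rule dependent_nat_choice)
      fix x and n :: nat assume "\<not> termip (red []) x \<and> (n = 0 \<longrightarrow> x = t)"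
      then obtain y where "(red [])\<inverse>\<inverse> y x" "\<not> termip (red []) y"
        by (blast elim: not_accp_down)
      then show "\<exists>y. (\<not> termip (red []) y \<and> (Suc n = 0 \<longrightarrow> y = t)) \<and> red [] x y"
        by blast
    qed (use nt in blast)
    with that show False unfolding SN_def by blast
  qed
qed

lemma SN_reduct: "SN t \<Longrightarrow> red [] t t' \<Longrightarrow> SN t'"
  unfolding SN_iff_termip by (erule accp_downward) simp

lemma SN_intro: "(\<And>t'. red [] t t' \<Longrightarrow> SN t') \<Longrightarrow> SN t"
  unfolding SN_iff_termip by (rule accpI) simp

lemma SN_induct [consumes 1, case_names reducts]:
  assumes "SN t" and "\<And>t. (\<And>t'. red [] t t' \<Longrightarrow> P t') \<Longrightarrow> P t"
  shows "P t"
  using assms(1) unfolding SN_iff_termip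
  by (induction rule: accp.induct) (simp add: assms(2))

lemma SN_context:
  assumes "\<And>t t'. red [] t t' \<Longrightarrow> red [] (C t) (C t')" and "SN (C t)"
  shows "SN t"
  unfolding SN_def
proof
  assume "\<exists>f. f 0 = t \<and> (\<forall>i. red [] (f i) (f (Suc i)))"
  then obtain f where "f 0 = t" "\<forall>i. red [] (f i) (f (Suc i))" by blast
  then have "(C \<circ> f) 0 = C t \<and> (\<forall>i. red [] ((C \<circ> f) i) ((C \<circ> f) (Suc i)))"
    using assms(1) by simp
  with assms(2) show False unfolding SN_def by blast
qed

definition CR0 :: "ty \<Rightarrow> bool" where
  "CR0 \<phi> \<longleftrightarrow> (iso \<phi> \<longrightarrow> reducible \<phi> (star_tm \<phi>))"

definition CR1 :: "ty \<Rightarrow> bool" where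
  "CR1 \<phi> \<longleftrightarrow> (\<forall>t. typing [] t \<phi> \<longrightarrow> reducible \<phi> t \<longrightarrow> SN t)"

definition CR2 :: "ty \<Rightarrow> bool" where
  "CR2 \<phi> \<longleftrightarrow> (\<forall>t t'. typing [] t \<phi> \<longrightarrow> reducible \<phi> t \<longrightarrow> red [] t t' \<longrightarrow> reducible \<phi> t')"

definition CR3 :: "ty \<Rightarrow> bool" where
  "CR3 \<phi> \<longleftrightarrow> (\<forall>t. typing [] t \<phi> \<longrightarrow> neutral t \<longrightarrow> (\<forall>t'. red [] t t' \<longrightarrow> reducible \<phi> t')
                 \<longrightarrow> reducible \<phi> t)"

lemma reducible_star_tm_of_typing:
  "CR0 \<phi> \<Longrightarrow> typing G t \<phi> \<Longrightarrow> typing G t T \<Longrightarrow> iso T \<Longrightarrow> reducible \<phi> (star_tm T)"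
  unfolding CR0_def using typing_unique by blast

lemma CR_atomic:
  assumes "\<phi> = TTop \<or> \<phi> = TVar a"
  shows "CR0 \<phi> \<and> CR1 \<phi> \<and> CR2 \<phi> \<and> CR3 \<phi>"
proof -
  have red_SN: "reducible \<phi> t = SN t" for t
    using assms by auto
  have "SN Star"
    using star_tm_normal[OF iso_top] by (auto intro: SN_intro)
  moreover have "iso \<phi> \<Longrightarrow> \<phi> = TTop"
    using assms by (auto elim: iso.cases)
  ultimately show ?thesis
    unfolding CR0_def CR1_def CR2_def CR3_def red_SN by (auto intro: SN_reduct SN_intro)
qed

lemma reducible_Pi1I:
  assumes "CR0 A" "CR3 A" and t: "typing [] t (Prod A B)"
    and "\<And>u v. t = Pair u v \<Longrightarrow> reducible A u"
    and "\<And>t'. red [] t t' \<Longrightarrow> reducible A (Pi1 t')"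
  shows "reducible A (Pi1 t)"
proof -
  have ty: "typing [] (Pi1 t) A" using t by (rule t_pi1)
  have "reducible A r" if "red [] (Pi1 t) r" for r
    using red_Pi1_cases[OF that] assms(4,5) reducible_star_tm_of_typing[OF assms(1) ty] by blast
  with ty assms(2) show ?thesis unfolding CR3_def neutral_def by blast
qed

lemma reducible_Pi2I:
  assumes "CR0 B" "CR3 B" and t: "typing [] t (Prod A B)"
    and "\<And>u v. t = Pair u v \<Longrightarrow> reducible B v"
    and "\<And>t'. red [] t t' \<Longrightarrow> reducible B (Pi2 t')"
  shows "reducible B (Pi2 t)"
proof -
  have ty: "typing [] (Pi2 t) B" using t by (rule t_pi2)
  have "reducible B r" if "red [] (Pi2 t) r" for r
    using red_Pi2_cases[OF that] assms(4,5) reducible_star_tm_of_typing[OF assms(1) ty] by blast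
  with ty assms(2) show ?thesis unfolding CR3_def neutral_def by blast
qed

lemma CR0_Prod:
  assumes "CR0 A" "CR3 A" "CR0 B" "CR3 B"
  shows "CR0 (Prod A B)"
  unfolding CR0_def
proof
  assume iso_AB: "iso (Prod A B)"
  then have "iso A" "iso B" by (auto elim: iso.cases)
  then have ty: "typing [] (star_tm (Prod A B)) (Prod A B)"
    by (intro typing_star_tm iso.intros)
  have normal: "\<not> red [] (star_tm (Prod A B)) t'" for t'
    using star_tm_normal[OF iso_AB] .
  have "reducible A (Pi1 (star_tm (Prod A B)))"
    by (rule reducible_Pi1I[OF assms(1,2) ty])
      (use \<open>iso A\<close> assms(1) normal in \<open>auto simp: CR0_def\<close>)
  moreover have "reducible B (Pi2 (star_tm (Prod A B)))"
    by (rule reducible_Pi2I[OF assms(3,4) ty])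
      (use \<open>iso B\<close> assms(3) normal in \<open>auto simp: CR0_def\<close>)
  ultimately show "reducible (Prod A B) (star_tm (Prod A B))" by simp
qed

lemma CR1_Prod: "CR1 A \<Longrightarrow> CR1 (Prod A B)"
  unfolding CR1_def by (auto intro: SN_context[where C = Pi1] c_pi1 t_pi1)

lemma CR2_Prod: "CR2 A \<Longrightarrow> CR2 B \<Longrightarrow> CR2 (Prod A B)"
  unfolding CR2_def by (simp; meson c_pi1 c_pi2 t_pi1 t_pi2)

lemma CR3_Prod:
  assumes "CR0 A" "CR3 A" "CR0 B" "CR3 B"
  shows "CR3 (Prod A B)"
  unfolding CR3_def
proof (intro allI impI)
  fix t assume t: "typing [] t (Prod A B)" "neutral t"
    and reducts: "\<forall>t'. red [] t t' \<longrightarrow> reducible (Prod A B) t'"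
  have "reducible A (Pi1 t)"
    by (rule reducible_Pi1I[OF assms(1,2) t(1)]) (use t(2) reducts in \<open>auto simp: neutral_def\<close>)
  moreover have "reducible B (Pi2 t)"
    by (rule reducible_Pi2I[OF assms(3,4) t(1)]) (use t(2) reducts in \<open>auto simp: neutral_def\<close>)
  ultimately show "reducible (Prod A B) t" by simp
qed

text \<open>The head \<open>t\<close> enters only through its \<beta>-contractions and its reducts, so this serves both
  for neutral heads (CR3) and for the head \<open>*\<^sup>\<tau>\<close> of an arrow type \<open>\<tau>\<close> (CR0).\<close>

lemma reducible_AppI:
  assumes "CR2 A" "CR0 B" "CR3 B" and t: "typing [] t (Fun A B)"
    and beta: "\<And>X b u. t = Lam X b \<Longrightarrow> typing [] u A \<Longrightarrow> reducible A u \<Longrightarrow> reducible B (subst 0 b u)"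
    and head_reducts:
      "\<And>t' u. red [] t t' \<Longrightarrow> typing [] u A \<Longrightarrow> reducible A u \<Longrightarrow> reducible B (App t' u)"
    and "SN u"
  shows "typing [] u A \<Longrightarrow> reducible A u \<Longrightarrow> reducible B (App t u)"
  using \<open>SN u\<close>
proof (induction rule: SN_induct)
  case (reducts u)
  have ty: "typing [] (App t u) B" using t reducts.prems(1) by (rule t_app)
  have "reducible B r" if "red [] (App t u) r" for r
    using red_App_cases[OF that]
  proof (elim disjE exE conjE)
    fix u' assume u': "red [] u u'" "r = App t u'"
    have "typing [] u' A" using subject_reduction[OF u'(1) reducts.prems(1)] .
    moreover have "reducible A u'"
      using \<open>CR2 A\<close> reducts.prems u'(1) unfolding CR2_def by blast
    ultimately show ?thesis using reducts.IH[OF u'(1)] u'(2) by simp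
  qed (use beta head_reducts reducts.prems reducible_star_tm_of_typing[OF \<open>CR0 B\<close> ty] in auto)
  with ty \<open>CR3 B\<close> show ?case unfolding CR3_def neutral_def by blast
qed

lemma reducible_Free: "CR0 A \<Longrightarrow> CR3 A \<Longrightarrow> reducible A (Free x A)"
  unfolding CR3_def neutral_def by (auto intro: t_free dest!: red_Free_cases simp: CR0_def)

lemma CR0_Fun:
  assumes "CR1 A" "CR2 A" "CR0 B" "CR3 B"
  shows "CR0 (Fun A B)"
  unfolding CR0_def
proof
  assume iso_AB: "iso (Fun A B)"
  then have "iso B" by (auto elim: iso.cases)
  have ty: "typing [] (Lam A (star_tm B)) (Fun A B)"
    using \<open>iso B\<close> by (intro t_lam typing_star_tm)
  show "reducible (Fun A B) (star_tm (Fun A B))"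
  proof (simp only: star_tm.simps reducible.simps, intro allI impI)
    fix u assume u: "typing [] u A" "reducible A u"
    then have "SN u" using \<open>CR1 A\<close> unfolding CR1_def by blast
    show "reducible B (App (Lam A (star_tm B)) u)"
      by (rule reducible_AppI[OF assms(2-4) ty _ _ \<open>SN u\<close> u])
        (use \<open>iso B\<close> \<open>CR0 B\<close> star_tm_normal[OF iso_AB] in \<open>auto simp: CR0_def\<close>)
  qed
qed

lemma CR1_Fun:
  assumes "CR0 A" "CR3 A" "CR1 B"
  shows "CR1 (Fun A B)"
  unfolding CR1_def
proof (intro allI impI)
  fix t assume t: "typing [] t (Fun A B)" "reducible (Fun A B) t"
  have "reducible B (App t (Free 0 A))"
    using t reducible_Free[OF assms(1,2)] t_free by simp
  then have "SN (App t (Free 0 A))"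
    using \<open>CR1 B\<close> t(1) t_free unfolding CR1_def by (blast intro: t_app)
  then show "SN t" by (rule SN_context[rotated]) (rule c_appl)
qed

lemma CR2_Fun: "CR2 B \<Longrightarrow> CR2 (Fun A B)"
  unfolding CR2_def by (simp; meson c_appl t_app)

lemma CR3_Fun:
  assumes "CR1 A" "CR2 A" "CR0 B" "CR3 B"
  shows "CR3 (Fun A B)"
  unfolding CR3_def
proof (intro allI impI)
  fix t assume t: "typing [] t (Fun A B)" "neutral t"
    and reducts: "\<forall>t'. red [] t t' \<longrightarrow> reducible (Fun A B) t'"
  show "reducible (Fun A B) t"
  proof (simp only: reducible.simps, intro allI impI)
    fix u assume u: "typing [] u A" "reducible A u"
    then have "SN u" using \<open>CR1 A\<close> unfolding CR1_def by blast
    show "reducible B (App t u)"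
      by (rule reducible_AppI[OF assms(2-4) t(1) _ _ \<open>SN u\<close> u])
        (use t(2) reducts in \<open>auto simp: neutral_def\<close>)
  qed
qed

lemma CR_all: "CR0 \<phi> \<and> CR1 \<phi> \<and> CR2 \<phi> \<and> CR3 \<phi>"
proof (induction \<phi>)
  case TTop
  then show ?case by (rule CR_atomic[of _ 0]) simp
next
  case (TVar a)
  then show ?case by (rule CR_atomic) simp
next
  case (Prod A B)
  then show ?case using CR0_Prod CR1_Prod CR2_Prod CR3_Prod by blast
next
  case (Fun A B)
  then show ?case using CR0_Fun CR1_Fun CR2_Fun CR3_Fun by blast
qed

theorem lemma6p2p3:
  fixes \<phi> :: ty
  shows "(iso \<phi> \<longrightarrow> reducible \<phi> (star_tm \<phi>))
       \<and> (\<forall>t. typing [] t \<phi> \<longrightarrow> reducible \<phi> t \<longrightarrow> SN t)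
       \<and> (\<forall>t t'. typing [] t \<phi> \<longrightarrow> reducible \<phi> t \<longrightarrow> red [] t t' \<longrightarrow> reducible \<phi> t')
       \<and> (\<forall>t. typing [] t \<phi> \<longrightarrow> neutral t \<longrightarrow> (\<forall>t'. red [] t t' \<longrightarrow> reducible \<phi> t')
              \<longrightarrow> reducible \<phi> t)"
  using CR_all[of \<phi>] unfolding CR0_def CR1_def CR2_def CR3_def .

end
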